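(* Let $L\in\mathbb{N}_+$ and $n_0,n_1,\dots,n_L\in\mathbb{N}_+$. Define the binomial bound $$\beta=\big\|B_{n_L}M_{n_{L-1},n_L}\cdots B_{n_1}M_{n_0,n_1}e_{n_0+1}\big\|_1$$ and the Montúfar bound $\mu=\prod_{l=1}^{L}\sum_{j=0}^{\min(n_0,\dots,n_{l-1})}\binom{n_l}{j}$. Then $\beta\le\mu$, and $\beta<\mu$ if and only if there exists $l\in\{1,\dots,L-1\}$ with $n_l<\min(n_0,\dots,n_l)+\min(n_0,\dots,n_{l+1})$.
   Context: $V$ denotes sequences $(v_j)_{j\in\mathbb{N}}$ (indexed from $0$) of nonnegative integers with finite sum; ${\rm e}_k\in V$ has $({\rm e}_k)_j=\delta_{kj}$. Clipping: $\mathrm{cl}_{i^*}(v)_i=v_i$ for $i<i^*$, $\sum_{j\ge i^*}v_j$ for $i=i^*$, $0$ for $i>i^*$. For $n\in\mathbb{N}_+$, $k\in\{0,\dots,n\}$ let $\gamma_{k,n}=\sum_{j=0}^{k}\binom{n}{j}{\rm e}_{n-j}$, and let $B_n\in\mathbb{N}^{(n+1)\times(n+1)}$ be given by $(B_n)_{a,b}=(\mathrm{cl}_{b-1}(\gamma_{b-1,n}))_{a-1}$, $a,b\in\{1,\dots,n+1\}$. For $n,n'\in\mathbb{N}$, the connector matrix $M_{n,n'}\in\mathbb{R}^{(n'+1)\times(n+1)}$ has entries $(M_{n,n'})_{a,b}=\delta_{a,\min(b,n'+1)}$. $e_{n_0+1}\in\mathbb{R}^{n_0+1}$ is the standard unit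 vector with $1$ in the last position; $\|\cdot\|_1$ is the sum of absolute values of entries. *)

theory Defs
  imports "Jordan_Normal_Form.Matrix"
begin

text \<open>Elements of V: functions nat => nat (finitely supported ones are the relevant ones).\<close>

definition unitV :: "nat \<Rightarrow> nat \<Rightarrow> nat" where
  "unitV k = (\<lambda>j. if j = k then 1 else 0)"

definition clip :: "nat \<Rightarrow> (nat \<Rightarrow> nat) \<Rightarrow> nat \<Rightarrow> nat" where
  "clip i v = (\<lambda>j. if j < i then v j
                  else if j = i then (\<Sum>k \<in> {k. i \<le> k \<and> v k \<noteq> 0}. v k)
                  else 0)"

definition gammaV :: "nat \<Rightarrow> nat \<Rightarrow> nat \<Rightarrow> nat" where
  "gammaV k n = (\<lambda>i. \<Sum>j\<le>k. (n choose j) * unitV (n - j) i)"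

text \<open>B_n, 0-indexed: entry (a,b) with a,b in {0..n} is (cl_b(gamma_{b,n}))_a.\<close>
definition Bmat :: "nat \<Rightarrow> real mat" where
  "Bmat n = mat (n+1) (n+1) (\<lambda>(a,b). real (clip b (gammaV b n) a))"

definition Mmat :: "nat \<Rightarrow> nat \<Rightarrow> real mat" where
  "Mmat n n' = mat (n'+1) (n+1) (\<lambda>(a,b). if a = min b n' then 1 else 0)"

fun chainMat :: "(nat \<Rightarrow> nat) \<Rightarrow> nat \<Rightarrow> real mat" where
  "chainMat ns 0 = 1\<^sub>m (ns 0 + 1)"
| "chainMat ns (Suc l) = Bmat (ns (Suc l)) * Mmat (ns l) (ns (Suc l)) * chainMat ns l"

definition norm1 :: "real vec \<Rightarrow> real" where
  "norm1 v = (\<Sum>i<dim_vec v. \<bar>v $ i\<bar>)"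

definition binomBound :: "(nat \<Rightarrow> nat) \<Rightarrow> nat \<Rightarrow> real" where
  "binomBound ns L = norm1 (chainMat ns L *\<^sub>v unit_vec (ns 0 + 1) (ns 0))"

definition montufarBound :: "(nat \<Rightarrow> nat) \<Rightarrow> nat \<Rightarrow> nat" where
  "montufarBound ns L = (\<Prod>l=1..L. \<Sum>j\<le>Min (ns ` {..<l}). ns l choose j)"

end

theory Submission
  imports Defs
begin

text \<open>
  Applying the chain to the last unit vector produces a nonnegative weight vector w_l that is
  supported on [0, m_l], where m_l = min(n_0, ..., n_l), and positive at m_l. The connector moves
  the weight at index c to min(c, n_(l+1)), and column b of B_n sums to S(n, b), the sum of the
  binomial coefficients C(n, j) for j \<le> b. So the total weight grows at each layer by at most the
  Montufar factor S(n_(l+1), m_l), with equality iff all weight sits at indices c \<ge> m_(l+1).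
  If a layer is lossless, the weight after the next layer is a positive multiple of column
  m_(l+1) of B_(n_(l+1)), whose support is {m_(l+1)} together with [n_(l+1) - m_(l+1), m_(l+1));
  hence the following layer is lossless iff n_(l+1) \<ge> m_(l+1) + m_(l+2).
\<close>

definition binom_prefix_sum :: "nat \<Rightarrow> nat \<Rightarrow> nat" where
  "binom_prefix_sum n d = (\<Sum>j\<le>d. n choose j)"

lemma binom_prefix_sum_pos: "0 < binom_prefix_sum n d"
  unfolding binom_prefix_sum_def by (simp add: sum_pos2[where i = 0])

lemma binom_prefix_sum_min: "binom_prefix_sum n (min d n) = binom_prefix_sum n d"
  unfolding binom_prefix_sum_def by (rule sum.mono_neutral_left) auto

lemma binom_prefix_sum_mono: "d \<le> d' \<Longrightarrow> binom_prefix_sum n d \<le> binom_prefix_sum n d'"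
  unfolding binom_prefix_sum_def by (rule sum_mono2) auto

lemma binom_prefix_sum_less_iff:
  assumes "d \<le> d'"
  shows "binom_prefix_sum n d < binom_prefix_sum n d' \<longleftrightarrow> min d n < min d' n"
proof
  assume "binom_prefix_sum n d < binom_prefix_sum n d'"
  then show "min d n < min d' n"
    using assms binom_prefix_sum_min[of n d] binom_prefix_sum_min[of n d']
    by (metis min.mono nat_less_le order_refl)
next
  assume "min d n < min d' n"
  then have "d < n" "d < d'"
    by (simp_all add: min_def split: if_splits)
  then have "binom_prefix_sum n d < binom_prefix_sum n d + (n choose Suc d)"
    by simp
  also have "\<dots> = binom_prefix_sum n (Suc d)"
    by (simp add: binom_prefix_sum_def)
  also have "\<dots> \<le> binom_prefix_sum n d'"
    using \<open>d < d'\<close> by (intro binom_prefix_sum_mono) simp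
  finally show "binom_prefix_sum n d < binom_prefix_sum n d'" .
qed

lemma gammaV_eq: "gammaV b n i = (if i \<le> n \<and> n - i \<le> b then n choose (n - i) else 0)"
proof (cases "i \<le> n")
  case True
  then have "gammaV b n i = (\<Sum>j\<le>b. if j = n - i then n choose j else 0)"
    unfolding gammaV_def unitV_def by (intro sum.cong) auto
  then show ?thesis
    using True by simp
qed (auto simp: gammaV_def unitV_def)

lemma sum_gammaV: "(\<Sum>i\<le>n. gammaV b n i) = binom_prefix_sum n b"
proof -
  have "(\<Sum>i\<le>n. gammaV b n i) = (\<Sum>j\<le>b. (n choose j) * (\<Sum>i\<le>n. unitV (n - j) i))"
    unfolding gammaV_def by (subst sum.swap) (simp add: sum_distrib_left)
  also have "\<dots> = binom_prefix_sum n b"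
    unfolding binom_prefix_sum_def unitV_def by (rule sum.cong) auto
  finally show ?thesis .
qed

lemma clip_self:
  assumes "\<And>k. n < k \<Longrightarrow> v k = 0" and "i \<le> n"
  shows "clip i v i = (\<Sum>k\<in>{i..n}. v k)"
proof -
  have "clip i v i = (\<Sum>k | i \<le> k \<and> v k \<noteq> 0. v k)"
    by (simp add: clip_def)
  also have "\<dots> = (\<Sum>k\<in>{i..n}. v k)"
    using assms(1) by (intro sum.mono_neutral_left) (auto, metis less_irrefl not_le)
  finally show ?thesis .
qed

lemma sum_clip:
  assumes "\<And>k. n < k \<Longrightarrow> v k = 0" and "i \<le> n"
  shows "(\<Sum>k\<le>n. clip i v k) = (\<Sum>k\<le>n. v k)"
proof -
  have split: "{..n} = {..<i} \<union> {i..n}" and tail: "{i..n} = insert i {i<..n}"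
    using assms(2) by auto
  have "(\<Sum>k\<le>n. clip i v k) = (\<Sum>k<i. clip i v k) + clip i v i"
    unfolding split tail by (subst sum.union_disjoint) (auto simp: clip_def)
  also have "\<dots> = (\<Sum>k<i. v k) + (\<Sum>k\<in>{i..n}. v k)"
    using clip_self[OF assms] by (simp add: clip_def)
  also have "\<dots> = (\<Sum>k\<le>n. v k)"
    unfolding split by (rule sum.union_disjoint[symmetric]) auto
  finally show ?thesis .
qed

lemma gammaV_eq_0: "n < i \<Longrightarrow> gammaV b n i = 0"
  by (simp add: gammaV_eq)

lemma sum_binomial_column:
  "b \<le> n \<Longrightarrow> (\<Sum>a\<le>n. clip b (gammaV b n) a) = binom_prefix_sum n b"
  by (simp add: sum_clip[OF gammaV_eq_0] sum_gammaV)

lemma binomial_column_pos_iff: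
  assumes "b \<le> n"
  shows "0 < clip b (gammaV b n) a \<longleftrightarrow> a = b \<or> (a < b \<and> n - b \<le> a)"
proof (cases a b rule: linorder_cases)
  case less
  then show ?thesis
    using assms by (auto simp: clip_def gammaV_eq)
next
  case equal
  have "gammaV b n n \<le> (\<Sum>k\<in>{b..n}. gammaV b n k)"
    using assms by (intro member_le_sum) auto
  then show ?thesis
    using equal assms by (simp add: clip_self[OF gammaV_eq_0] gammaV_eq)
next
  case greater
  then show ?thesis
    by (simp add: clip_def)
qed

definition connector_map :: "nat \<Rightarrow> nat \<Rightarrow> (nat \<Rightarrow> real) \<Rightarrow> nat \<Rightarrow> real" where
  "connector_map n n' w b = (\<Sum>c\<le>n. if b = min c n' then w c else 0)"

definition binomial_map :: "nat \<Rightarrow> (nat \<Rightarrow> real) \<Rightarrow> nat \<Rightarrow> real" where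
  "binomial_map n u a = (\<Sum>b\<le>n. real (clip b (gammaV b n) a) * u b)"

lemma Mmat_mult_vec: "Mmat n n' *\<^sub>v vec (n + 1) w = vec (n' + 1) (connector_map n n' w)"
  by (rule eq_vecI)
    (auto simp: Mmat_def connector_map_def scalar_prod_def atLeast0LessThan lessThan_Suc_atMost
      intro: sum.cong)

lemma Bmat_mult_vec: "Bmat n *\<^sub>v vec (n + 1) u = vec (n + 1) (binomial_map n u)"
  by (rule eq_vecI)
    (auto simp: Bmat_def binomial_map_def scalar_prod_def atLeast0LessThan lessThan_Suc_atMost)

lemma connector_map_nonneg: "(\<And>c. 0 \<le> w c) \<Longrightarrow> 0 \<le> connector_map n n' w b"
  unfolding connector_map_def by (simp add: sum_nonneg)

lemma binomial_map_nonneg: "(\<And>b. 0 \<le> u b) \<Longrightarrow> 0 \<le> binomial_map n u a"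
  unfolding binomial_map_def by (simp add: sum_nonneg)

lemma connector_map_eq_0: "(\<And>c. min c n' = b \<Longrightarrow> w c = 0) \<Longrightarrow> connector_map n n' w b = 0"
  unfolding connector_map_def by (intro sum.neutral) auto

lemma binomial_map_eq_0: "(\<And>b. a \<le> b \<Longrightarrow> u b = 0) \<Longrightarrow> binomial_map n u a = 0"
  unfolding binomial_map_def by (intro sum.neutral) (auto simp: clip_def not_le)

lemma connector_map_pos:
  assumes "\<And>c. 0 \<le> w c" and "c \<le> n" and "0 < w c"
  shows "0 < connector_map n n' w (min c n')"
proof -
  have "w c \<le> connector_map n n' w (min c n')"
    unfolding connector_map_def
    using member_le_sum[of c "{..n}" "\<lambda>c'. if min c n' = min c' n' then w c' else 0"] assms(1,2)
    by (simp add: eq_commute)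
  then show ?thesis
    using assms(3) by linarith
qed

lemma binomial_map_pos:
  assumes "\<And>b. 0 \<le> u b" and "b \<le> n" and "0 < clip b (gammaV b n) a" and "0 < u b"
  shows "0 < binomial_map n u a"
proof -
  have "0 < real (clip b (gammaV b n) a) * u b"
    using assms(3,4) by simp
  also have "\<dots> \<le> binomial_map n u a"
    unfolding binomial_map_def using assms(1,2) by (intro member_le_sum) auto
  finally show ?thesis .
qed

lemma binomial_map_concentrated:
  assumes "\<And>b. b \<noteq> \<beta> \<Longrightarrow> u b = 0" and "\<beta> \<le> n"
  shows "binomial_map n u a = real (clip \<beta> (gammaV \<beta> n) a) * u \<beta>"
proof -
  have "binomial_map n u a = (\<Sum>b\<le>n. if b = \<beta> then real (clip \<beta> (gammaV \<beta> n) a) * u \<beta> else 0)"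
    unfolding binomial_map_def using assms(1) by (intro sum.cong) auto
  then show ?thesis
    using assms(2) by simp
qed

lemma sum_binomial_map:
  "(\<Sum>a\<le>n. binomial_map n u a) = (\<Sum>b\<le>n. real (binom_prefix_sum n b) * u b)"
proof -
  have "(\<Sum>a\<le>n. binomial_map n u a) = (\<Sum>b\<le>n. real (\<Sum>a\<le>n. clip b (gammaV b n) a) * u b)"
    unfolding binomial_map_def by (subst sum.swap) (simp add: sum_distrib_right)
  then show ?thesis
    by (simp add: sum_binomial_column)
qed

lemma sum_connector_map:
  "(\<Sum>b\<le>n'. f b * connector_map n n' w b) = (\<Sum>c\<le>n. f (min c n') * w c)"
proof -
  have "(\<Sum>b\<le>n'. f b * connector_map n n' w b)
      = (\<Sum>c\<le>n. \<Sum>b\<le>n'. if b = min c n' then f (min c n') * w c else 0)"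
    unfolding connector_map_def sum_distrib_left
    by (subst sum.swap) (auto intro!: sum.cong)
  then show ?thesis
    by simp
qed

definition prefix_min :: "(nat \<Rightarrow> nat) \<Rightarrow> nat \<Rightarrow> nat" where
  "prefix_min ns l = Min (ns ` {..l})"

lemma prefix_min_0 [simp]: "prefix_min ns 0 = ns 0"
  by (simp add: prefix_min_def)

lemma prefix_min_Suc: "prefix_min ns (Suc l) = min (prefix_min ns l) (ns (Suc l))"
  unfolding prefix_min_def atMost_Suc by (simp add: min.commute)

lemma prefix_min_le: "prefix_min ns l \<le> ns l"
  unfolding prefix_min_def by (rule Min_le) auto

fun chain_weight :: "(nat \<Rightarrow> nat) \<Rightarrow> nat \<Rightarrow> nat \<Rightarrow> real" where
  "chain_weight ns 0 = (\<lambda>a. if a = ns 0 then 1 else 0)"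
| "chain_weight ns (Suc l) =
     binomial_map (ns (Suc l)) (connector_map (ns l) (ns (Suc l)) (chain_weight ns l))"

lemma chainMat_carrier: "chainMat ns l \<in> carrier_mat (ns l + 1) (ns 0 + 1)"
  by (induction l) (auto simp: Bmat_def Mmat_def)

lemma chainMat_mult_unit_vec:
  "chainMat ns l *\<^sub>v unit_vec (ns 0 + 1) (ns 0) = vec (ns l + 1) (chain_weight ns l)"
proof (induction l)
  case 0
  show ?case
    by (auto simp: unit_vec_def)
next
  case (Suc l)
  have B: "Bmat (ns (Suc l)) \<in> carrier_mat (ns (Suc l) + 1) (ns (Suc l) + 1)"
    and M: "Mmat (ns l) (ns (Suc l)) \<in> carrier_mat (ns (Suc l) + 1) (ns l + 1)"
    by (simp_all add: Bmat_def Mmat_def)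
  have "chainMat ns (Suc l) *\<^sub>v unit_vec (ns 0 + 1) (ns 0)
      = (Bmat (ns (Suc l)) * Mmat (ns l) (ns (Suc l))) *\<^sub>v vec (ns l + 1) (chain_weight ns l)"
    using assoc_mult_mat_vec[OF mult_carrier_mat[OF B M] chainMat_carrier[of ns l]] Suc.IH by simp
  also have "\<dots> = Bmat (ns (Suc l)) *\<^sub>v (Mmat (ns l) (ns (Suc l)) *\<^sub>v vec (ns l + 1) (chain_weight ns l))"
    using assoc_mult_mat_vec[OF B M] by simp
  finally show ?case
    by (simp only: Mmat_mult_vec Bmat_mult_vec chain_weight.simps)
qed

lemma chain_weight_nonneg: "0 \<le> chain_weight ns l a"
  by (induction l arbitrary: a) (simp_all add: binomial_map_nonneg connector_map_nonneg)

lemma chain_weight_eq_0: "prefix_min ns l < a \<Longrightarrow> chain_weight ns l a = 0"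
proof (induction l arbitrary: a)
  case (Suc l)
  show ?case
    using Suc by (auto simp: prefix_min_Suc intro!: binomial_map_eq_0 connector_map_eq_0)
qed simp

lemma chain_weight_pos_imp_le:
  assumes "0 < chain_weight ns l a"
  shows "a \<le> prefix_min ns l"
proof (rule ccontr)
  assume "\<not> a \<le> prefix_min ns l"
  then show False
    using chain_weight_eq_0[of ns l a] assms by simp
qed

lemma connector_map_chain_weight_pos:
  "0 < chain_weight ns l (prefix_min ns l) \<Longrightarrow>
    0 < connector_map (ns l) (ns (Suc l)) (chain_weight ns l) (prefix_min ns (Suc l))"
  using connector_map_pos[OF chain_weight_nonneg prefix_min_le] by (simp add: prefix_min_Suc)

lemma chain_weight_pos: "0 < chain_weight ns l (prefix_min ns l)"
proof (induction l)
  case (Suc l)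
  let ?m = "prefix_min ns (Suc l)"
  have "0 < clip ?m (gammaV ?m (ns (Suc l))) ?m"
    using binomial_column_pos_iff[OF prefix_min_le] by simp
  then show ?case
    using binomial_map_pos[where u = "connector_map (ns l) (ns (Suc l)) (chain_weight ns l)",
        OF connector_map_nonneg[OF chain_weight_nonneg] prefix_min_le
        _ connector_map_chain_weight_pos[OF Suc.IH]]
    by simp
qed simp

definition chain_mass :: "(nat \<Rightarrow> nat) \<Rightarrow> nat \<Rightarrow> real" where
  "chain_mass ns l = (\<Sum>a\<le>ns l. chain_weight ns l a)"

lemma binomBound_eq_chain_mass: "binomBound ns l = chain_mass ns l"
  unfolding binomBound_def chainMat_mult_unit_vec norm1_def chain_mass_def
  by (simp add: chain_weight_nonneg lessThan_Suc_atMost)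

lemma chain_mass_Suc:
  "chain_mass ns (Suc l) = (\<Sum>c\<le>ns l. real (binom_prefix_sum (ns (Suc l)) c) * chain_weight ns l c)"
  using sum_binomial_map[of "ns (Suc l)"] sum_connector_map[where n = "ns l" and n' = "ns (Suc l)"]
  by (simp add: chain_mass_def binom_prefix_sum_min)

definition lossless_step :: "(nat \<Rightarrow> nat) \<Rightarrow> nat \<Rightarrow> bool" where
  "lossless_step ns l \<longleftrightarrow> (\<forall>c. 0 < chain_weight ns l c \<longrightarrow> prefix_min ns (Suc l) \<le> c)"

lemma chain_mass_Suc_le:
  "chain_mass ns (Suc l) \<le> chain_mass ns l * binom_prefix_sum (ns (Suc l)) (prefix_min ns l)"
  and chain_mass_Suc_eq_iff:
  "chain_mass ns (Suc l) = chain_mass ns l * binom_prefix_sum (ns (Suc l)) (prefix_min ns l)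
     \<longleftrightarrow> lossless_step ns l"
proof -
  let ?S = "binom_prefix_sum (ns (Suc l))" and ?w = "chain_weight ns l"
  define f where "f = (\<lambda>c. real (?S c) * ?w c)"
  define g where "g = (\<lambda>c. real (?S (prefix_min ns l)) * ?w c)"
  have mass: "chain_mass ns (Suc l) = sum f {..ns l}"
    "chain_mass ns l * ?S (prefix_min ns l) = sum g {..ns l}"
    by (simp only: chain_mass_Suc f_def)
      (simp add: chain_mass_def g_def sum_distrib_right mult.commute)
  have "f c \<le> g c \<and> (f c = g c \<longleftrightarrow> (0 < ?w c \<longrightarrow> prefix_min ns (Suc l) \<le> c))" for c
  proof (cases "?w c = 0")
    case False
    then have pos: "0 < ?w c"
      using chain_weight_nonneg[of ns l c] by simp
    then have c_le: "c \<le> prefix_min ns l"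
      by (rule chain_weight_pos_imp_le)
    have "min c (ns (Suc l)) < prefix_min ns (Suc l) \<longleftrightarrow> c < prefix_min ns (Suc l)"
      using prefix_min_le[of ns "Suc l"] by linarith
    then have less_iff: "?S c < ?S (prefix_min ns l) \<longleftrightarrow> c < prefix_min ns (Suc l)"
      using binom_prefix_sum_less_iff[OF c_le] by (simp add: prefix_min_Suc)
    show ?thesis
      using binom_prefix_sum_mono[OF c_le, where n = "ns (Suc l)"] less_iff pos
      by (auto simp: f_def g_def)
  qed (simp add: f_def g_def)
  then have term_le: "f c \<le> g c"
    and term_eq_iff: "f c = g c \<longleftrightarrow> (0 < ?w c \<longrightarrow> prefix_min ns (Suc l) \<le> c)" for c
    by simp_all
  show "chain_mass ns (Suc l) \<le> chain_mass ns l * ?S (prefix_min ns l)"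
    unfolding mass by (intro sum_mono term_le)
  have "sum f {..ns l} = sum g {..ns l} \<longleftrightarrow> (\<forall>c\<le>ns l. f c = g c)"
    using sum_mono_inv[of f _ g] term_le by (auto intro: sum.cong)
  also have "\<dots> \<longleftrightarrow> lossless_step ns l"
    unfolding lossless_step_def term_eq_iff
    using chain_weight_pos_imp_le[of ns l] prefix_min_le[of ns l] le_trans by blast
  finally show "chain_mass ns (Suc l) = chain_mass ns l * ?S (prefix_min ns l) \<longleftrightarrow> lossless_step ns l"
    unfolding mass .
qed

lemma lossless_step_0: "lossless_step ns 0"
  by (simp add: lossless_step_def prefix_min_Suc)

lemma chain_weight_Suc_concentrated:
  assumes "lossless_step ns l"
  defines "m \<equiv> prefix_min ns (Suc l)" and "n \<equiv> ns (Suc l)"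
  shows "chain_weight ns (Suc l) a
    = real (clip m (gammaV m n) a) * connector_map (ns l) n (chain_weight ns l) m"
  unfolding chain_weight.simps n_def
proof (rule binomial_map_concentrated[OF _ prefix_min_le[of ns "Suc l", folded m_def]])
  fix b assume "b \<noteq> m"
  show "connector_map (ns l) (ns (Suc l)) (chain_weight ns l) b = 0"
  proof (rule connector_map_eq_0, rule ccontr)
    fix c assume c: "min c (ns (Suc l)) = b" "chain_weight ns l c \<noteq> 0"
    then have "0 < chain_weight ns l c"
      using chain_weight_nonneg[of ns l c] by simp
    then have "c \<le> prefix_min ns l" and "m \<le> c"
      using assms(1) chain_weight_pos_imp_le unfolding lossless_step_def m_def by blast+
    then show False
      using c(1) \<open>b \<noteq> m\<close> by (simp add: m_def prefix_min_Suc min_def split: if_splits)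
  qed
qed

lemma lossless_step_Suc_iff:
  assumes "lossless_step ns l"
  shows "lossless_step ns (Suc l)
    \<longleftrightarrow> \<not> ns (Suc l) < prefix_min ns (Suc l) + prefix_min ns (Suc (Suc l))"
proof -
  let ?n = "ns (Suc l)" and ?m = "prefix_min ns (Suc l)" and ?m' = "prefix_min ns (Suc (Suc l))"
  have "0 < connector_map (ns l) ?n (chain_weight ns l) ?m"
    using connector_map_chain_weight_pos[OF chain_weight_pos] .
  then have support: "0 < chain_weight ns (Suc l) a \<longleftrightarrow> a = ?m \<or> (a < ?m \<and> ?n - ?m \<le> a)" for a
    unfolding chain_weight_Suc_concentrated[OF assms]
    using binomial_column_pos_iff[OF prefix_min_le, of ns "Suc l" a]
    by (simp add: zero_less_mult_iff)
  have "?m' \<le> ?m" "?m \<le> ?n"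
    by (simp_all add: prefix_min_Suc[of ns "Suc l"] prefix_min_le)
  then have "(\<forall>a. a = ?m \<or> (a < ?m \<and> ?n - ?m \<le> a) \<longrightarrow> ?m' \<le> a) \<longleftrightarrow> \<not> ?n < ?m + ?m'"
    by (auto dest: spec[of _ "?n - ?m"])
  then show ?thesis
    unfolding lossless_step_def support .
qed

lemma all_lossless_steps_iff:
  "(\<forall>k<L. lossless_step ns k) \<longleftrightarrow> (\<forall>l\<in>{1..<L}. \<not> ns l < prefix_min ns l + prefix_min ns (Suc l))"
proof (induction L)
  case (Suc L)
  show ?case
  proof (cases L)
    case (Suc j)
    then have "{1..<Suc L} = insert L {1..<L}"
      by auto
    then show ?thesis
      using Suc.IH lossless_step_Suc_iff[of ns j] \<open>L = Suc j\<close> by (auto simp: less_Suc_eq)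
  qed (simp add: lossless_step_0)
qed simp

lemma montufarBound_Suc:
  "montufarBound ns (Suc l) = montufarBound ns l * binom_prefix_sum (ns (Suc l)) (prefix_min ns l)"
  unfolding montufarBound_def binom_prefix_sum_def prefix_min_def
  by (simp add: prod.nat_ivl_Suc' lessThan_Suc_atMost)

lemma chain_mass_le_montufarBound:
  "chain_mass ns l \<le> montufarBound ns l"
  and chain_mass_eq_montufarBound_iff:
  "chain_mass ns l = montufarBound ns l \<longleftrightarrow> (\<forall>k<l. lossless_step ns k)"
proof (induction l)
  case 0
  show "chain_mass ns 0 \<le> montufarBound ns 0"
    and "chain_mass ns 0 = montufarBound ns 0 \<longleftrightarrow> (\<forall>k<0. lossless_step ns k)"
    by (simp_all add: chain_mass_def montufarBound_def)
next
  case (Suc l)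
  let ?s = "real (binom_prefix_sum (ns (Suc l)) (prefix_min ns l))"
  have "0 < ?s"
    by (simp add: binom_prefix_sum_pos)
  then have "chain_mass ns l * ?s \<le> montufarBound ns l * ?s"
    and "chain_mass ns l * ?s = montufarBound ns l * ?s \<longleftrightarrow> (\<forall>k<l. lossless_step ns k)"
    using Suc.IH by simp_all
  then show "chain_mass ns (Suc l) \<le> montufarBound ns (Suc l)"
    and "chain_mass ns (Suc l) = montufarBound ns (Suc l) \<longleftrightarrow> (\<forall>k<Suc l. lossless_step ns k)"
    using chain_mass_Suc_le[of ns l] chain_mass_Suc_eq_iff[of ns l]
    by (auto simp: montufarBound_Suc less_Suc_eq)
qed

theorem mainTheorem12:
  fixes ns :: "nat \<Rightarrow> nat" and L :: nat
  assumes "L \<ge> 1" and "\<And>l. l \<le> L \<Longrightarrow> ns l \<ge> 1"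
  shows "binomBound ns L \<le> real (montufarBound ns L) \<and>
         (binomBound ns L < real (montufarBound ns L) \<longleftrightarrow>
           (\<exists>l\<in>{1..L-1}. ns l < Min (ns ` {..l}) + Min (ns ` {..Suc l})))"
proof -
  have "{1..L-1} = {1..<L}"
    by auto
  then have "(\<exists>l\<in>{1..L-1}. ns l < Min (ns ` {..l}) + Min (ns ` {..Suc l}))
      \<longleftrightarrow> \<not> (\<forall>k<L. lossless_step ns k)"
    unfolding all_lossless_steps_iff prefix_min_def by blast
  then show ?thesis
    unfolding binomBound_eq_chain_mass
    using chain_mass_le_montufarBound[of ns L] chain_mass_eq_montufarBound_iff[of ns L]
    by auto
qed

end
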